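(* Let $G$ be an infinite group. Then (i) $Sc_G^{\wedge}=\operatorname{cl}\{\epsilon p: \epsilon\in G^*,\ \epsilon\epsilon=\epsilon,\ p\in\beta G\}$; (ii) $Sc_G^{\wedge}$ is an ideal of the semigroup $\beta G$, and $p\in Sc_G^{\wedge}$ if and only if every member of $p$ contains a piecewise shifted $FP$-set; (iii) $Sc_G^{\wedge}$ is the smallest closed ideal of $\beta G$ containing all idempotents of $G^*$.
   Context: $\beta G$ is the compact right topological semigroup of ultrafilters on discrete $G$ ($gp=\{gP:P\in p\}$; $pq$ generated by $\bigcup_{x\in P}xQ_x$, $P\in p$, $Q_x\in q$), $G^*$ the free ultrafilters, $X^*=\{p\in G^*:X\in p\}$. For $p\in G^*$, $\Delta_p(X)=\{gp:g\in G, X\in gp\}$. $A\subseteq G$ is scattered if for every infinite $X\subseteq A$ there is $p\in X^*$ with $\Delta_p(X)$ finite; $Sc_G$ is the ideal of scattered subsets, and $Sc_G^{\wedge}=\{p\in\beta G: G\setminus A\in p$ for each $A\in Sc_G\}$. Given an injective sequence $(g_n)$ and a sequence $(b_n)$ in $G$, the set $\{g_{i_1}\cdots g_{i_k}b_{i_k}: k\ge1, 0\le i_1<\dots<i_k<\omega\}$ is a piecewise shifted $FP$-set. *)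

theory Defs
  imports Main
begin

text \<open>The group G is the type 'a of class group_add; the (not necessarily
commutative) group operation is written +.  Ultrafilters on G are represented
as sets of subsets of G.\<close>

definition ultrafilter :: "'a set set \<Rightarrow> bool" where
  "ultrafilter U \<longleftrightarrow> {} \<notin> U \<and> UNIV \<in> U
     \<and> (\<forall>A B. A \<in> U \<and> A \<subseteq> B \<longrightarrow> B \<in> U)
     \<and> (\<forall>A B. A \<in> U \<and> B \<in> U \<longrightarrow> A \<inter> B \<in> U)
     \<and> (\<forall>A. A \<in> U \<or> - A \<in> U)"

definition betaG :: "'a set set set" where
  "betaG = {U. ultrafilter U}"

definition Gstar :: "'a set set set" where
  "Gstar = {U. ultrafilter U \<and> (\<forall>x. {x} \<notin> U)}"

definition Xstar :: "'a set \<Rightarrow> 'a set set set" where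
  "Xstar X = {p \<in> Gstar. X \<in> p}"

definition lshift :: "'a::group_add \<Rightarrow> 'a set set \<Rightarrow> 'a set set" where
  "lshift g p = (\<lambda>P. (\<lambda>x. g + x) ` P) ` p"

definition umult :: "'a::group_add set set \<Rightarrow> 'a set set \<Rightarrow> 'a set set" where
  "umult p q = {A. \<exists>P\<in>p. \<exists>Q. (\<forall>x\<in>P. Q x \<in> q) \<and> (\<Union>x\<in>P. (\<lambda>y. x + y) ` Q x) \<subseteq> A}"

text \<open>closure in beta G (topology generated by the basic clopen sets {p. A \<in> p})\<close>
definition bcl :: "'a set set set \<Rightarrow> 'a set set set" where
  "bcl S = {p \<in> betaG. \<forall>A\<in>p. \<exists>s\<in>S. A \<in> s}"

definition bclosed :: "'a set set set \<Rightarrow> bool" where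
  "bclosed S \<longleftrightarrow> S \<subseteq> betaG \<and> bcl S = S"

definition Delta :: "'a::group_add set set \<Rightarrow> 'a set \<Rightarrow> 'a set set set" where
  "Delta p X = {lshift g p | g. X \<in> lshift g p}"

definition scattered :: "'a::group_add set \<Rightarrow> bool" where
  "scattered A \<longleftrightarrow> (\<forall>X. X \<subseteq> A \<and> infinite X \<longrightarrow> (\<exists>p \<in> Xstar X. finite (Delta p X)))"

definition ScHat :: "'a::group_add set set set" where
  "ScHat = {p \<in> betaG. \<forall>A. scattered A \<longrightarrow> - A \<in> p}"

definition idempotent_star :: "'a::group_add set set \<Rightarrow> bool" where
  "idempotent_star e \<longleftrightarrow> e \<in> Gstar \<and> umult e e = e"

definition bideal :: "'a::group_add set set set \<Rightarrow> bool" where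
  "bideal I \<longleftrightarrow> I \<noteq> {} \<and> I \<subseteq> betaG \<and>
     (\<forall>p\<in>I. \<forall>q\<in>betaG. umult p q \<in> I \<and> umult q p \<in> I)"

definition psFP :: "(nat \<Rightarrow> 'a::group_add) \<Rightarrow> (nat \<Rightarrow> 'a) \<Rightarrow> 'a set" where
  "psFP g b = {sum_list (map g is) + b (last is) | is. is \<noteq> [] \<and> sorted_wrt (<) is}"

definition is_psFP :: "'a::group_add set \<Rightarrow> bool" where
  "is_psFP S \<longleftrightarrow> (\<exists>g b. inj g \<and> S = psFP g b)"

end

theory Submission
  imports Defs
begin

text \<open>A set is non-scattered exactly when it belongs to some product \<open>e q\<close> of an idempotent
\<open>e \<in> G\<^sup>*\<close> with \<open>q \<in> \<beta>G\<close>. If every \<open>\<Delta>\<^sub>p(X)\<close> with \<open>p \<in> X\<^sup>*\<close> is infinite, a minimal closed subset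
of \<open>X\<^sup>*\<close> invariant under left multiplication by \<open>G\<^sup>*\<close> yields \<open>q \<in> X\<^sup>*\<close> fixed by some \<open>r \<in> G\<^sup>*\<close>,
and the Ellis-Numakura lemma turns \<open>r\<close> into an idempotent fixing \<open>q\<close>. A member of \<open>e q\<close> contains a
piecewise shifted \<open>FP\<close>-set by the Galvin-Glazer construction. Conversely, if a free ultrafilter
\<open>p\<close> contains a piecewise shifted \<open>FP\<close>-set \<open>X\<close>, peeling off index lists shows that infinitely many
translates \<open>hX\<close> belong to \<open>p\<close>; as \<open>G\<close> acts freely on \<open>\<beta>G\<close>, \<open>\<Delta>\<^sub>p(X)\<close> is infinite. All three
statements then follow from this characterisation of the members of \<open>Sc\<^sub>G\<^sup>\<and>\<close>.\<close>

text \<open>In multiplicative notation \<open>pre x A\<close> is \<open>x\<^sup>-\<^sup>1A\<close>.\<close>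

definition pre :: "'a::group_add \<Rightarrow> 'a set \<Rightarrow> 'a set" where
  "pre x A = (\<lambda>y. x + y) -` A"

lemma pre_iff [simp]: "y \<in> pre x A \<longleftrightarrow> x + y \<in> A"
  by (simp add: pre_def)

lemma pre_add: "pre y (pre x A) = pre (x + y) A"
  by (auto simp: pre_def add.assoc)

lemma pre_zero [simp]: "pre 0 A = A"
  by (simp add: pre_def)

lemma pre_Int: "pre x (A \<inter> B) = pre x A \<inter> pre x B"
  by auto

lemma pre_Compl: "pre x (- A) = - pre x A"
  by auto

lemma pre_mono: "A \<subseteq> B \<Longrightarrow> pre x A \<subseteq> pre x B"
  by auto

lemma pre_singleton: "pre y {x} = {- y + x}"
  by (auto simp: pre_def)

lemma pre_image: "pre g ((\<lambda>x. g + x) ` P) = P"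
  by auto

lemma image_pre: "(\<lambda>x. g + x) ` pre g A = A"
proof
  show "(\<lambda>x. g + x) ` pre g A \<subseteq> A"
    by (auto simp: pre_def)
  show "A \<subseteq> (\<lambda>x. g + x) ` pre g A"
  proof
    fix a assume "a \<in> A"
    then have "- g + a \<in> pre g A"
      by simp
    moreover have "a = g + (- g + a)"
      by simp
    ultimately show "a \<in> (\<lambda>x. g + x) ` pre g A"
      by blast
  qed
qed

lemma uf_empty: "ultrafilter U \<Longrightarrow> {} \<notin> U"
  by (simp add: ultrafilter_def)

lemma uf_UNIV: "ultrafilter U \<Longrightarrow> UNIV \<in> U"
  by (simp add: ultrafilter_def)

lemma uf_mono: "ultrafilter U \<Longrightarrow> A \<in> U \<Longrightarrow> A \<subseteq> B \<Longrightarrow> B \<in> U"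
  unfolding ultrafilter_def by blast

lemma uf_Int: "ultrafilter U \<Longrightarrow> A \<in> U \<Longrightarrow> B \<in> U \<Longrightarrow> A \<inter> B \<in> U"
  unfolding ultrafilter_def by blast

lemma uf_Int_iff: "ultrafilter U \<Longrightarrow> A \<inter> B \<in> U \<longleftrightarrow> A \<in> U \<and> B \<in> U"
  using uf_Int uf_mono by blast

lemma uf_Compl: "ultrafilter U \<Longrightarrow> - A \<in> U \<longleftrightarrow> A \<notin> U"
  unfolding ultrafilter_def by (metis Compl_disjoint)

lemma uf_nonempty: "ultrafilter U \<Longrightarrow> A \<in> U \<Longrightarrow> A \<noteq> {}"
  using uf_empty by blast

lemma uf_Un: "ultrafilter U \<Longrightarrow> A \<union> B \<in> U \<longleftrightarrow> A \<in> U \<or> B \<in> U"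
proof -
  assume u: "ultrafilter U"
  have "A \<union> B \<notin> U \<longleftrightarrow> -A \<in> U \<and> -B \<in> U"
    using uf_Compl[OF u, of "A \<union> B"] uf_Int_iff[OF u, of "-A" "-B"] by simp
  then show ?thesis using uf_Compl[OF u] by blast
qed

lemma uf_finite_Inter:
  assumes "ultrafilter U" "finite F" "F \<subseteq> U"
  shows "\<Inter>F \<in> U"
  using assms(2,3) by induction (auto simp: uf_UNIV uf_Int assms(1))

lemma uf_finite_Union:
  assumes "ultrafilter U" "finite F" "\<Union>F \<in> U"
  shows "\<exists>A\<in>F. A \<in> U"
  using assms(2,3) by induction (auto simp: uf_empty uf_Un assms(1))

lemma uf_subset_eq: "ultrafilter p \<Longrightarrow> ultrafilter q \<Longrightarrow> p \<subseteq> q \<Longrightarrow> p = q"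
proof -
  assume p: "ultrafilter p" and q: "ultrafilter q" and s: "p \<subseteq> q"
  have "q \<subseteq> p"
  proof
    fix A assume "A \<in> q"
    show "A \<in> p"
    proof (rule ccontr)
      assume "A \<notin> p"
      then have "-A \<in> p"
        using uf_Compl[OF p] by blast
      then have "-A \<in> q"
        using s by blast
      then show False using \<open>A \<in> q\<close> uf_Compl[OF q] by blast
    qed
  qed
  then show ?thesis using s by blast
qed

lemma betaG_iff: "p \<in> betaG \<longleftrightarrow> ultrafilter p"
  by (simp add: betaG_def)

lemma Gstar_uf: "p \<in> Gstar \<Longrightarrow> ultrafilter p"
  by (simp add: Gstar_def)

lemma Gstar_subset_betaG: "Gstar \<subseteq> betaG"
  by (auto simp: Gstar_def betaG_def)

lemma Gstar_infinite: "p \<in> Gstar \<Longrightarrow> A \<in> p \<Longrightarrow> infinite A"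
proof
  assume "p \<in> Gstar" "A \<in> p" "finite A"
  moreover have "A = (\<Union>x\<in>A. {x})"
    by blast
  ultimately show False
    using uf_finite_Union[of p "(\<lambda>x. {x}) ` A"] by (auto simp: Gstar_def)
qed

lemma Gstar_Diff_finite:
  assumes p: "p \<in> Gstar" and "A \<in> p" "finite B"
  shows "A - B \<in> p"
proof -
  have "- (A \<inter> B) \<in> p"
    using Gstar_infinite[OF p, of "A \<inter> B"] uf_Compl[OF Gstar_uf[OF p]] \<open>finite B\<close> by blast
  then have "A \<inter> - (A \<inter> B) \<in> p"
    using uf_Int[OF Gstar_uf[OF p] \<open>A \<in> p\<close>] by blast
  moreover have "A \<inter> - (A \<inter> B) = A - B"
    by blast
  ultimately show ?thesis
    by simp
qed

definition fip :: "'a set set \<Rightarrow> bool" where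
  "fip H \<longleftrightarrow> (\<forall>F. finite F \<longrightarrow> F \<subseteq> H \<longrightarrow> \<Inter>F \<noteq> {})"

lemma fip_insertI:
  assumes "\<And>F. finite F \<Longrightarrow> F \<subseteq> H \<Longrightarrow> \<Inter>F \<inter> X \<noteq> {}"
  shows "fip (insert X H)"
  unfolding fip_def
proof (intro allI impI)
  fix F assume "finite F" "F \<subseteq> insert X H"
  then have "\<Inter>(F - {X}) \<inter> X \<noteq> {}"
    using assms by blast
  moreover have "\<Inter>(F - {X}) \<inter> X \<subseteq> \<Inter>F"
    by blast
  ultimately show "\<Inter>F \<noteq> {}"
    by blast
qed

lemma fip_maximal_ultrafilter:
  assumes fip: "fip M" and maximal: "\<And>X. fip (insert X M) \<Longrightarrow> X \<in> M"
  shows "ultrafilter M"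
proof -
  have meets: "\<Inter>F \<noteq> {}" if "finite F" "F \<subseteq> M" for F
    using fip that by (simp add: fip_def)
  have add: "X \<in> M" if "\<And>F. finite F \<Longrightarrow> F \<subseteq> M \<Longrightarrow> \<Inter>F \<inter> X \<noteq> {}" for X
    using maximal fip_insertI that by blast
  show ?thesis
    unfolding ultrafilter_def
  proof (intro conjI allI impI)
    show "{} \<notin> M"
      using meets[of "{{}}"] by auto
    show "UNIV \<in> M"
      by (rule add) (simp add: meets)
  next
    fix A B assume AB: "A \<in> M \<and> A \<subseteq> B"
    show "B \<in> M"
    proof (rule add)
      fix F assume "finite F" "F \<subseteq> M"
      then have "\<Inter>(insert A F) \<noteq> {}"
        using AB by (intro meets) auto
      then show "\<Inter>F \<inter> B \<noteq> {}"
        using AB by blast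
    qed
  next
    fix A B assume AB: "A \<in> M \<and> B \<in> M"
    show "A \<inter> B \<in> M"
    proof (rule add)
      fix F assume "finite F" "F \<subseteq> M"
      then have "\<Inter>(insert A (insert B F)) \<noteq> {}"
        using AB by (intro meets) auto
      then show "\<Inter>F \<inter> (A \<inter> B) \<noteq> {}"
        by (simp add: Int_ac)
    qed
  next
    fix A
    show "A \<in> M \<or> - A \<in> M"
    proof (rule ccontr)
      assume "\<not> (A \<in> M \<or> - A \<in> M)"
      then obtain F1 where F1: "finite F1" "F1 \<subseteq> M" "\<Inter>F1 \<inter> A = {}"
        using add[of A] by blast
      obtain F2 where F2: "finite F2" "F2 \<subseteq> M" "\<Inter>F2 \<inter> - A = {}"
        using add[of "- A"] \<open>\<not> (A \<in> M \<or> - A \<in> M)\<close> by blast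
      have "\<Inter>(F1 \<union> F2) \<subseteq> (\<Inter>F1 \<inter> A) \<union> (\<Inter>F2 \<inter> - A)"
        by blast
      then show False
        using meets[of "F1 \<union> F2"] F1 F2 by auto
    qed
  qed
qed

lemma ultrafilter_exists:
  assumes "fip H"
  obtains U where "ultrafilter U" "H \<subseteq> U"
proof -
  let ?A = "{K. H \<subseteq> K \<and> fip K}"
  have "\<exists>M\<in>?A. \<forall>X\<in>?A. M \<subseteq> X \<longrightarrow> X = M"
  proof (rule subset_Zorn)
    fix C assume ch: "subset.chain ?A C"
    show "\<exists>U\<in>?A. \<forall>X\<in>C. X \<subseteq> U"
    proof (cases "C = {}")
      case True
      then show ?thesis
        using assms by blast
    next
      case False
      have "fip (\<Union>C)"
        unfolding fip_def
      proof (intro allI impI)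
        fix F assume "finite F" "F \<subseteq> \<Union>C"
        then obtain B where "B \<in> C" "F \<subseteq> B"
          using finite_subset_Union_chain[OF _ _ False ch] by metis
        then show "\<Inter>F \<noteq> {}"
          using ch \<open>finite F\<close> unfolding subset.chain_def fip_def by blast
      qed
      moreover have "H \<subseteq> \<Union>C"
        using False ch unfolding subset.chain_def by blast
      ultimately show ?thesis
        by blast
    qed
  qed
  then obtain M where M: "H \<subseteq> M" "fip M" and maximal: "\<forall>X\<in>?A. M \<subseteq> X \<longrightarrow> X = M"
    by blast
  have "X \<in> M" if "fip (insert X M)" for X
  proof -
    have "insert X M \<in> ?A"
      using M that by blast
    then have "insert X M = M"
      using maximal by blast
    then show ?thesis
      by blast
  qed
  then have "ultrafilter M"
    by (rule fip_maximal_ultrafilter[OF M(2)])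
  then show ?thesis
    using that M(1) by blast
qed

lemma free_ultrafilter_exists:
  assumes "infinite X"
  obtains p where "p \<in> Gstar" "X \<in> p"
proof -
  have "fip (insert X (range (\<lambda>x. - {x})))"
  proof (rule fip_insertI)
    fix F :: "'a set set" assume F: "finite F" "F \<subseteq> range (\<lambda>x. - {x})"
    then obtain P :: "'a set" where "finite P" "F = (\<lambda>x. - {x}) ` P"
      by (meson finite_subset_image)
    then have "X - P \<subseteq> \<Inter>F \<inter> X"
      by blast
    moreover have "X - P \<noteq> {}"
      using assms \<open>finite P\<close> by (metis Diff_infinite_finite finite.emptyI)
    ultimately show "\<Inter>F \<inter> X \<noteq> {}"
      by blast
  qed
  then obtain p where p: "ultrafilter p" "insert X (range (\<lambda>x. - {x})) \<subseteq> p"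
    by (rule ultrafilter_exists)
  have "{x} \<notin> p" for x
    using p uf_Compl[of p "{x}"] by blast
  then show ?thesis
    using that p(1,2) by (auto simp: Gstar_def)
qed

lemma umult_iff:
  assumes p: "ultrafilter p" and q: "ultrafilter q"
  shows "A \<in> umult p q \<longleftrightarrow> {x. pre x A \<in> q} \<in> p"
proof
  assume "A \<in> umult p q"
  then obtain P Q where P: "P \<in> p" "\<forall>x\<in>P. Q x \<in> q" "(\<Union>x\<in>P. (\<lambda>y. x + y) ` Q x) \<subseteq> A"
    unfolding umult_def mem_Collect_eq by (elim bexE exE conjE) (rule that)
  have "P \<subseteq> {x. pre x A \<in> q}"
  proof
    fix x assume x: "x \<in> P"
    have "Q x \<subseteq> pre x A"
      using P(3) x by fastforce
    then show "x \<in> {x. pre x A \<in> q}"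
      using uf_mono[OF q] P(2) x by blast
  qed
  then show "{x. pre x A \<in> q} \<in> p"
    using uf_mono[OF p] P(1) by blast
next
  assume a: "{x. pre x A \<in> q} \<in> p"
  have "(\<Union>x\<in>{x. pre x A \<in> q}. (\<lambda>y. x + y) ` pre x A) \<subseteq> A"
    by auto
  then show "A \<in> umult p q"
    unfolding umult_def mem_Collect_eq
    by (intro bexI[OF _ a] exI[of _ "\<lambda>x. pre x A"]) simp
qed

lemma umult_uf:
  assumes p: "ultrafilter p" and q: "ultrafilter q"
  shows "ultrafilter (umult p q)"
proof -
  note I = umult_iff[OF p q]
  show ?thesis unfolding ultrafilter_def
  proof (intro conjI allI impI)
    have "{x. pre x {} \<in> q} = {}"
      using uf_empty[OF q] by (simp add: pre_def)
    then show "{} \<notin> umult p q"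
      using I uf_empty[OF p] by simp
    have "{x. pre x UNIV \<in> q} = UNIV"
      using uf_UNIV[OF q] by (simp add: pre_def)
    then show "UNIV \<in> umult p q"
      using I uf_UNIV[OF p] by simp
  next
    fix A B assume ab: "A \<in> umult p q \<and> A \<subseteq> B"
    have "{x. pre x A \<in> q} \<subseteq> {x. pre x B \<in> q}"
      using ab uf_mono[OF q] pre_mono by blast
    then show "B \<in> umult p q"
      using ab I uf_mono[OF p] by blast
  next
    fix A B assume ab: "A \<in> umult p q \<and> B \<in> umult p q"
    have "{x. pre x (A \<inter> B) \<in> q} = {x. pre x A \<in> q} \<inter> {x. pre x B \<in> q}"
      using uf_Int_iff[OF q] by (auto simp: pre_Int)
    then show "A \<inter> B \<in> umult p q"
      using ab I uf_Int[OF p] by simp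
  next
    fix A
    have "{x. pre x (-A) \<in> q} = - {x. pre x A \<in> q}"
      using uf_Compl[OF q] by (auto simp: pre_Compl)
    then show "A \<in> umult p q \<or> - A \<in> umult p q"
      using I uf_Compl[OF p] by auto
  qed
qed

lemma umult_betaG: "p \<in> betaG \<Longrightarrow> q \<in> betaG \<Longrightarrow> umult p q \<in> betaG"
  by (simp add: betaG_iff umult_uf)

lemma umult_assoc:
  assumes p: "ultrafilter p" and q: "ultrafilter q" and r: "ultrafilter r"
  shows "umult (umult p q) r = umult p (umult q r)"
proof (rule set_eqI)
  fix A
  have pq: "ultrafilter (umult p q)" and qr: "ultrafilter (umult q r)"
    using umult_uf assms by auto
  have "A \<in> umult (umult p q) r \<longleftrightarrow> {x. pre x A \<in> r} \<in> umult p q"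
    using umult_iff[OF pq r] .
  also have "\<dots> \<longleftrightarrow> {y. pre y {x. pre x A \<in> r} \<in> q} \<in> p"
    using umult_iff[OF p q] .
  also have "{y. pre y {x. pre x A \<in> r} \<in> q} = {y. {z. pre z (pre y A) \<in> r} \<in> q}"
    by (simp add: pre_add) (simp add: pre_def)
  also have "\<dots> = {y. pre y A \<in> umult q r}"
    using umult_iff[OF q r] by simp
  also have "(\<dots> \<in> p) \<longleftrightarrow> A \<in> umult p (umult q r)"
    using umult_iff[OF p qr] by simp
  finally show "A \<in> umult (umult p q) r \<longleftrightarrow> A \<in> umult p (umult q r)" .
qed

lemma umult_Gstar:
  assumes p: "ultrafilter p" and q: "q \<in> Gstar"
  shows "umult p q \<in> Gstar"
proof -
  have uq: "ultrafilter q"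
    using q by (simp add: Gstar_def)
  have u: "ultrafilter (umult p q)"
    using umult_uf[OF p uq] .
  have "{x} \<notin> umult p q" for x
  proof
    assume "{x} \<in> umult p q"
    then have a: "{y. pre y {x} \<in> q} \<in> p"
      using umult_iff[OF p uq] by simp
    have "{y. pre y {x} \<in> q} = {}"
      using q by (simp add: Gstar_def pre_singleton)
    then show False using a uf_empty[OF p] by simp
  qed
  then show ?thesis using u by (simp add: Gstar_def)
qed

lemma lshift_iff: "A \<in> lshift g p \<longleftrightarrow> pre g A \<in> p"
proof
  assume "A \<in> lshift g p"
  then obtain P where "P \<in> p" "A = (\<lambda>x. g + x) ` P"
    unfolding lshift_def by blast
  then show "pre g A \<in> p"
    by (simp add: pre_image)
next
  assume "pre g A \<in> p"
  then have "(\<lambda>x. g + x) ` pre g A \<in> lshift g p"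
    unfolding lshift_def by (rule imageI)
  then show "A \<in> lshift g p"
    by (simp add: image_pre)
qed

lemma lshift_add: "lshift a (lshift b p) = lshift (a + b) p"
  by (rule set_eqI) (simp add: lshift_iff pre_add)

lemma lshift_zero: "lshift 0 p = p"
  by (rule set_eqI) (simp add: lshift_iff pre_def)

section \<open>The topology of \<open>\<beta>G\<close>\<close>

lemma bcl_mono: "S \<subseteq> T \<Longrightarrow> bcl S \<subseteq> bcl T"
  unfolding bcl_def by blast

lemma bclosedI: "K \<subseteq> betaG \<Longrightarrow> bcl K \<subseteq> K \<Longrightarrow> bclosed K"
  unfolding bclosed_def bcl_def by blast

lemma bclosed_subset: "bclosed K \<Longrightarrow> K \<subseteq> betaG"
  by (simp add: bclosed_def)

lemma bclosed_bcl: "bclosed K \<Longrightarrow> bcl K = K"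
  by (simp add: bclosed_def)

lemma bclosed_Inter:
  assumes "C \<noteq> {}" "\<forall>K\<in>C. bclosed K"
  shows "bclosed (\<Inter>C)"
proof (rule bclosedI)
  obtain K0 where "K0 \<in> C"
    using assms by blast
  then show "\<Inter>C \<subseteq> betaG"
    using assms bclosed_subset by blast
  show "bcl (\<Inter>C) \<subseteq> \<Inter>C"
  proof
    fix p assume p: "p \<in> bcl (\<Inter>C)"
    show "p \<in> \<Inter>C"
    proof
      fix K assume K: "K \<in> C"
      have "bcl (\<Inter>C) \<subseteq> bcl K"
        using K by (intro bcl_mono) blast
      then show "p \<in> K"
        using p K assms bclosed_bcl by blast
    qed
  qed
qed

lemma bclosed_Int: "bclosed K \<Longrightarrow> bclosed L \<Longrightarrow> bclosed (K \<inter> L)"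
  using bclosed_Inter[of "{K, L}"] by simp

lemma bclosed_basic: "bclosed {s \<in> betaG. A \<in> s}"
proof (rule bclosedI)
  show "bcl {s \<in> betaG. A \<in> s} \<subseteq> {s \<in> betaG. A \<in> s}"
  proof
    fix p assume p: "p \<in> bcl {s \<in> betaG. A \<in> s}"
    then have u: "ultrafilter p"
      by (simp add: bcl_def betaG_def)
    have "A \<in> p"
    proof (rule ccontr)
      assume "A \<notin> p"
      then have "-A \<in> p"
        using uf_Compl[OF u] by blast
      then obtain s where "s \<in> betaG" "A \<in> s" "-A \<in> s"
        using p unfolding bcl_def by blast
      then show False using uf_Compl[of s A] by (simp add: betaG_def)
    qed
    then show "p \<in> {s \<in> betaG. A \<in> s}"
      using p by (simp add: bcl_def)
  qed
qed auto

lemma bclosed_singleton: "e \<in> betaG \<Longrightarrow> bclosed {e}"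
proof (rule bclosedI)
  assume e: "e \<in> betaG"
  then show "{e} \<subseteq> betaG"
    by simp
  show "bcl {e} \<subseteq> {e}"
  proof
    fix p assume p: "p \<in> bcl {e}"
    then have "p \<subseteq> e" "p \<in> betaG"
      by (auto simp: bcl_def)
    then show "p \<in> {e}"
      using uf_subset_eq e by (simp add: betaG_def)
  qed
qed

lemma bclosed_Gstar: "bclosed (Gstar :: 'a set set set)"
proof (rule bclosedI)
  show "(Gstar :: 'a set set set) \<subseteq> betaG"
    by (rule Gstar_subset_betaG)
  show "bcl Gstar \<subseteq> (Gstar :: 'a set set set)"
  proof
    fix p :: "'a set set" assume p: "p \<in> bcl Gstar"
    have "{x} \<notin> p" for x
    proof
      assume "{x} \<in> p"
      then obtain s where "s \<in> Gstar" "{x} \<in> s"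
        using p unfolding bcl_def by blast
      then show False by (simp add: Gstar_def)
    qed
    then show "p \<in> Gstar"
      using p by (simp add: bcl_def Gstar_def betaG_def)
  qed
qed

lemma bclosed_Xstar: "bclosed (Xstar X)"
proof -
  have "Xstar X = Gstar \<inter> {s \<in> betaG. X \<in> s}"
    using Gstar_subset_betaG by (auto simp: Xstar_def)
  then show ?thesis
    by (simp add: bclosed_Int bclosed_Gstar bclosed_basic)
qed

lemma bclosed_memberI:
  assumes K: "bclosed K" and u: "ultrafilter u" and common: "\<And>A. \<forall>s\<in>K. A \<in> s \<Longrightarrow> A \<in> u"
  shows "u \<in> K"
proof -
  have "\<exists>s\<in>K. A \<in> s" if "A \<in> u" for A
  proof (rule ccontr)
    assume none: "\<not> (\<exists>s\<in>K. A \<in> s)"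
    have "- A \<in> s" if "s \<in> K" for s
    proof -
      have "ultrafilter s"
        using K bclosed_subset that betaG_iff by blast
      then show ?thesis
        using uf_Compl none that by blast
    qed
    then have "- A \<in> u"
      using common by blast
    then show False
      using \<open>A \<in> u\<close> uf_Compl[OF u] by blast
  qed
  then have "u \<in> bcl K"
    using u by (simp add: bcl_def betaG_iff)
  then show ?thesis
    using K bclosed_bcl by blast
qed

lemma compact_fip:
  assumes cl: "\<forall>K\<in>KK. bclosed K"
    and fi: "\<And>F. finite F \<Longrightarrow> F \<subseteq> KK \<Longrightarrow> \<exists>p\<in>betaG. \<forall>K\<in>F. p \<in> K"
  shows "\<exists>p\<in>betaG. \<forall>K\<in>KK. p \<in> K"
proof -
  define H where "H = {A. \<exists>K\<in>KK. \<forall>p\<in>K. A \<in> p}"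
  have "fip H"
    unfolding fip_def
  proof (intro allI impI)
    fix F assume F: "finite F" "F \<subseteq> H"
    then have "\<forall>A\<in>F. \<exists>K. K \<in> KK \<and> (\<forall>p\<in>K. A \<in> p)"
      unfolding H_def by blast
    then obtain f where f: "\<forall>A\<in>F. f A \<in> KK \<and> (\<forall>p\<in>f A. A \<in> p)"
      by (rule bchoice[THEN exE])
    have "finite (f ` F)" "f ` F \<subseteq> KK"
      using F f by auto
    then obtain p where p: "p \<in> betaG" "\<forall>K\<in>f ` F. p \<in> K"
      using fi[OF \<open>finite (f ` F)\<close> \<open>f ` F \<subseteq> KK\<close>] by blast
    have "F \<subseteq> p"
      using p f by blast
    then have "\<Inter>F \<in> p"
      using uf_finite_Inter[of p F] p F by (simp add: betaG_def)
    then show "\<Inter>F \<noteq> {}"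
      using uf_empty[of p] p by (auto simp: betaG_def)
  qed
  then obtain u where u: "ultrafilter u" "H \<subseteq> u"
    using ultrafilter_exists by blast
  have "u \<in> K" if "K \<in> KK" for K
  proof (rule bclosed_memberI)
    show "bclosed K"
      using cl that by blast
    fix A assume "\<forall>s\<in>K. A \<in> s"
    then show "A \<in> u"
      using that u(2) unfolding H_def by blast
  qed (rule u(1))
  then show ?thesis
    using u(1) betaG_iff by blast
qed
lemma compact_chain:
  assumes ne: "C \<noteq> {}" and cl: "\<And>K. K \<in> C \<Longrightarrow> bclosed K \<and> K \<noteq> {}"
    and ch: "subset.chain UNIV C"
  shows "\<Inter>C \<noteq> {}"
proof -
  have "\<exists>p\<in>betaG. \<forall>K\<in>C. p \<in> K"
  proof (rule compact_fip)
    show "\<forall>K\<in>C. bclosed K"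
      using cl by blast
    fix F assume F: "finite F" "F \<subseteq> C"
    show "\<exists>p\<in>betaG. \<forall>K\<in>F. p \<in> K"
    proof (cases "F = {}")
      case True
      obtain K p where "K \<in> C" "p \<in> K"
        using ne cl by blast
      then show ?thesis
        using True cl bclosed_subset by blast
    next
      case False
      have "subset.chain UNIV F"
        using ch F unfolding subset_chain_def by blast
      then have "\<Inter>F \<in> F"
        using Inter_in_chain[OF F(1) False] by blast
      then obtain p where "p \<in> \<Inter>F"
        using cl F by blast
      moreover have "p \<in> betaG"
        using calculation \<open>\<Inter>F \<in> F\<close> F cl bclosed_subset by blast
      ultimately show ?thesis
        by blast
    qed
  qed
  then show ?thesis
    by blast
qed

text \<open>Right multiplication \<open>r \<mapsto> r q\<close> is continuous, hence closed by compactness.\<close>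

lemma bclosed_umult_preimage:
  assumes Y: "bclosed Y" and q: "q \<in> betaG"
  shows "bclosed {r \<in> betaG. umult r q \<in> Y}"
proof (rule bclosedI)
  show "bcl {r \<in> betaG. umult r q \<in> Y} \<subseteq> {r \<in> betaG. umult r q \<in> Y}"
  proof
    fix r assume r: "r \<in> bcl {r \<in> betaG. umult r q \<in> Y}"
    have ur: "ultrafilter r" and uq: "ultrafilter q"
      using r q by (auto simp: bcl_def betaG_def)
    have "umult r q \<in> bcl Y"
      unfolding bcl_def
    proof (intro CollectI conjI ballI)
      show "umult r q \<in> betaG"
        using umult_uf[OF ur uq] by (simp add: betaG_def)
      fix B assume "B \<in> umult r q"
      then have "{x. pre x B \<in> q} \<in> r"
        using umult_iff[OF ur uq] by blast
      then obtain r' where r': "r' \<in> betaG" "umult r' q \<in> Y" "{x. pre x B \<in> q} \<in> r'"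
        using r unfolding bcl_def by blast
      then have "B \<in> umult r' q"
        using umult_iff[of r' q B] uq by (simp add: betaG_def)
      then show "\<exists>s\<in>Y. B \<in> s"
        using r' by blast
    qed
    then have "umult r q \<in> Y"
      using Y bclosed_bcl by blast
    then show "r \<in> {r \<in> betaG. umult r q \<in> Y}"
      using r by (simp add: bcl_def)
  qed
qed auto

lemma bclosed_umult_image:
  assumes K: "bclosed K" and q: "q \<in> betaG"
  shows "bclosed ((\<lambda>r. umult r q) ` K)"
proof (rule bclosedI)
  have uq: "ultrafilter q"
    using q by (simp add: betaG_iff)
  show "(\<lambda>r. umult r q) ` K \<subseteq> betaG"
    using K bclosed_subset umult_betaG q by blast
  show "bcl ((\<lambda>r. umult r q) ` K) \<subseteq> (\<lambda>r. umult r q) ` K"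
  proof
    fix p assume p: "p \<in> bcl ((\<lambda>r. umult r q) ` K)"
    have up: "ultrafilter p"
      using p by (simp add: bcl_def betaG_iff)
    define f where "f A = K \<inter> {r \<in> betaG. umult r q \<in> {s \<in> betaG. A \<in> s}}" for A
    have "\<exists>r\<in>betaG. \<forall>L\<in>f ` p. r \<in> L"
    proof (rule compact_fip)
      show "\<forall>L\<in>f ` p. bclosed L"
        unfolding f_def using K bclosed_umult_preimage[OF bclosed_basic q] bclosed_Int by blast
      fix F assume "finite F" "F \<subseteq> f ` p"
      then obtain P where P: "P \<subseteq> p" "finite P" "F = f ` P"
        using finite_subset_image[of F f p] by blast
      then have "\<Inter>P \<in> p"
        using uf_finite_Inter[OF up] by blast
      then obtain s where "s \<in> (\<lambda>r. umult r q) ` K" "\<Inter>P \<in> s"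
        using p unfolding bcl_def by blast
      then obtain r where r: "r \<in> K" "\<Inter>P \<in> umult r q"
        by blast
      then have "r \<in> betaG"
        using K bclosed_subset by blast
      then have "ultrafilter (umult r q)"
        using uq umult_uf betaG_iff by blast
      then have "A \<in> umult r q" if "A \<in> P" for A
        using uf_mono[OF _ r(2) Inter_lower[OF that]] by blast
      then have "r \<in> f A" if "A \<in> P" for A
        unfolding f_def using r(1) \<open>r \<in> betaG\<close> umult_betaG[OF _ q] that by blast
      then show "\<exists>r\<in>betaG. \<forall>L\<in>F. r \<in> L"
        using P(3) \<open>r \<in> betaG\<close> by blast
    qed
    then obtain r where r: "r \<in> betaG" "\<forall>A\<in>p. r \<in> f A"
      by blast
    then have "r \<in> K" "p \<subseteq> umult r q"
      using uf_UNIV[OF up] unfolding f_def by blast+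
    moreover have "ultrafilter r"
      using r(1) by (simp add: betaG_iff)
    ultimately have "p = umult r q"
      using uf_subset_eq[OF up umult_uf[OF _ uq]] by blast
    then show "p \<in> (\<lambda>r. umult r q) ` K"
      using \<open>r \<in> K\<close> by blast
  qed
qed
lemma minimal_bclosed_exists:
  assumes "bclosed K" "K \<noteq> {}" "P K"
    and chain: "\<And>C. C \<noteq> {} \<Longrightarrow> (\<And>L. L \<in> C \<Longrightarrow> bclosed L \<and> L \<noteq> {} \<and> P L) \<Longrightarrow>
                   subset.chain UNIV C \<Longrightarrow> P (\<Inter>C)"
  shows "\<exists>M\<subseteq>K. bclosed M \<and> M \<noteq> {} \<and> P M \<and> (\<forall>L\<subseteq>M. bclosed L \<and> L \<noteq> {} \<and> P L \<longrightarrow> L = M)"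
proof -
  let ?A = "{L. L \<subseteq> K \<and> bclosed L \<and> L \<noteq> {} \<and> P L}"
  have "\<exists>M\<in>?A. \<forall>L\<in>?A. L \<subseteq> M \<longrightarrow> L = M"
  proof (rule predicate_Zorn)
    show "partial_order_on ?A (relation_of (\<lambda>L M. M \<subseteq> L) ?A)"
      by (rule partial_order_on_relation_ofI) auto
  next
    fix C assume "C \<in> Chains (relation_of (\<lambda>L M. M \<subseteq> L) ?A)"
    then have C: "C \<subseteq> ?A" "subset.chain UNIV C"
      unfolding Chains_def relation_of_def subset.chain_def by auto
    show "\<exists>U\<in>?A. \<forall>L\<in>C. U \<subseteq> L"
    proof (cases "C = {}")
      case True
      then show ?thesis
        using assms(1-3) by blast
    next
      case False
      have L: "\<And>L. L \<in> C \<Longrightarrow> bclosed L \<and> L \<noteq> {} \<and> P L"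
        using C(1) by blast
      have "bclosed (\<Inter>C)"
        using bclosed_Inter[OF False] L by blast
      moreover have "\<Inter>C \<noteq> {}"
        using L by (intro compact_chain[OF False _ C(2)]) auto
      moreover have "P (\<Inter>C)"
        by (rule chain[OF False L C(2)])
      moreover have "\<Inter>C \<subseteq> K"
        using False C(1) by blast
      ultimately have "\<Inter>C \<in> ?A"
        by blast
      then show ?thesis
        by blast
    qed
  qed
  then obtain M where M: "M \<in> ?A" and minimal: "\<forall>L\<in>?A. L \<subseteq> M \<longrightarrow> L = M"
    by blast
  have "\<forall>L\<subseteq>M. bclosed L \<and> L \<noteq> {} \<and> P L \<longrightarrow> L = M"
  proof (intro allI impI)
    fix L assume "L \<subseteq> M" "bclosed L \<and> L \<noteq> {} \<and> P L"
    then have "L \<in> ?A"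
      using M by blast
    then show "L = M"
      using minimal \<open>L \<subseteq> M\<close> by blast
  qed
  then show ?thesis
    using M by blast
qed

lemma bclosed_subsemigroup_idempotent:
  assumes "bclosed T" "T \<noteq> {}" "\<forall>a\<in>T. \<forall>b\<in>T. umult a b \<in> T"
  shows "\<exists>e\<in>T. umult e e = e"
proof -
  have "\<forall>a\<in>\<Inter>C. \<forall>b\<in>\<Inter>C. umult a b \<in> \<Inter>C"
    if "C \<noteq> {}" "\<And>L. L \<in> C \<Longrightarrow> bclosed L \<and> L \<noteq> {} \<and> (\<forall>a\<in>L. \<forall>b\<in>L. umult a b \<in> L)"
      "subset.chain UNIV C" for C :: "'a set set set set"
    using that(2) by blast
  then obtain M where M: "M \<subseteq> T" "bclosed M" "M \<noteq> {}" and sg: "\<forall>a\<in>M. \<forall>b\<in>M. umult a b \<in> M"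
    and minimal_all: "\<forall>L\<subseteq>M. bclosed L \<and> L \<noteq> {} \<and> (\<forall>a\<in>L. \<forall>b\<in>L. umult a b \<in> L) \<longrightarrow> L = M"
    using minimal_bclosed_exists[where P = "\<lambda>L. \<forall>a\<in>L. \<forall>b\<in>L. umult a b \<in> L", OF assms]
    by blast
  have minimal: "L = M"
    if "L \<subseteq> M" "bclosed L" "L \<noteq> {}" "\<forall>a\<in>L. \<forall>b\<in>L. umult a b \<in> L" for L
    using minimal_all that by blast
  obtain e where e: "e \<in> M"
    using M by blast
  have uf: "ultrafilter a" if "a \<in> M" for a
    using that M bclosed_subset betaG_iff by blast
  have "(\<lambda>r. umult r e) ` M = M"
  proof (rule minimal)
    show "bclosed ((\<lambda>r. umult r e) ` M)"
      using M e bclosed_umult_image bclosed_subset by blast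
    show "\<forall>a\<in>(\<lambda>r. umult r e) ` M. \<forall>b\<in>(\<lambda>r. umult r e) ` M. umult a b \<in> (\<lambda>r. umult r e) ` M"
      using sg e uf by (auto simp: umult_assoc[symmetric] umult_uf)
  qed (use sg e M in auto)
  then obtain a where "a \<in> M" "umult a e = e"
    using e by (metis imageE)
  have "M \<inter> {r \<in> betaG. umult r e \<in> {e}} = M"
  proof (rule minimal)
    show "bclosed (M \<inter> {r \<in> betaG. umult r e \<in> {e}})"
      using M e bclosed_subset
      by (blast intro: bclosed_Int bclosed_umult_preimage bclosed_singleton)
    show "M \<inter> {r \<in> betaG. umult r e \<in> {e}} \<noteq> {}"
      using \<open>a \<in> M\<close> \<open>umult a e = e\<close> uf betaG_iff by blast
    show "\<forall>a\<in>M \<inter> {r \<in> betaG. umult r e \<in> {e}}. \<forall>b\<in>M \<inter> {r \<in> betaG. umult r e \<in> {e}}.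
            umult a b \<in> M \<inter> {r \<in> betaG. umult r e \<in> {e}}"
      using sg e uf by (auto simp: umult_assoc umult_betaG)
  qed blast
  then show ?thesis
    using e M by blast
qed


lemma idempotent_star_uf: "idempotent_star e \<Longrightarrow> ultrafilter e"
  by (simp add: idempotent_star_def Gstar_def)

lemma subset_chain_Int_image:
  assumes "subset.chain A C"
  shows "subset.chain UNIV ((\<lambda>L. L \<inter> B) ` C)"
  unfolding subset_chain_def
proof (intro conjI ballI)
  fix K1 K2 assume "K1 \<in> (\<lambda>L. L \<inter> B) ` C" "K2 \<in> (\<lambda>L. L \<inter> B) ` C"
  then obtain L1 L2 where L: "L1 \<in> C" "L2 \<in> C" "K1 = L1 \<inter> B" "K2 = L2 \<inter> B"
    by blast
  then have "L1 \<subseteq> L2 \<or> L2 \<subseteq> L1"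
    using assms unfolding subset_chain_def by blast
  then show "K1 \<subseteq> K2 \<or> K2 \<subseteq> K1"
    using L by blast
qed simp

definition Gstar_orbit :: "'a::group_add set set \<Rightarrow> 'a set set set" where
  "Gstar_orbit q = (\<lambda>r. umult r q) ` Gstar"

lemma bclosed_Int_Gstar_orbit: "bclosed L \<Longrightarrow> q \<in> L \<Longrightarrow> bclosed (L \<inter> Gstar_orbit q)"
  unfolding Gstar_orbit_def using bclosed_subset
  by (blast intro: bclosed_Int bclosed_umult_image bclosed_Gstar)

lemma Inter_chain_meets_Gstar_orbit:
  assumes C: "C \<noteq> {}" "\<And>L. L \<in> C \<Longrightarrow> bclosed L \<and> L \<noteq> {} \<and> (\<forall>q\<in>L. L \<inter> Gstar_orbit q \<noteq> {})"
    and chain: "subset.chain UNIV C" and q: "q \<in> \<Inter>C"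
  shows "\<Inter>C \<inter> Gstar_orbit q \<noteq> {}"
proof -
  have "\<Inter>((\<lambda>L. L \<inter> Gstar_orbit q) ` C) \<noteq> {}"
  proof (rule compact_chain)
    show "subset.chain UNIV ((\<lambda>L. L \<inter> Gstar_orbit q) ` C)"
      using chain by (rule subset_chain_Int_image)
    show "(\<lambda>L. L \<inter> Gstar_orbit q) ` C \<noteq> {}"
      using C(1) by blast
    fix K assume "K \<in> (\<lambda>L. L \<inter> Gstar_orbit q) ` C"
    then obtain L where L: "L \<in> C" "K = L \<inter> Gstar_orbit q"
      by blast
    have "q \<in> L"
      using q L(1) by blast
    moreover have "bclosed L" "L \<inter> Gstar_orbit q \<noteq> {}"
      using C(2)[OF L(1)] \<open>q \<in> L\<close> by auto
    ultimately show "bclosed K \<and> K \<noteq> {}"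
      using bclosed_Int_Gstar_orbit[of L q] L(2) by simp
  qed
  moreover have "\<Inter>((\<lambda>L. L \<inter> Gstar_orbit q) ` C) \<subseteq> \<Inter>C \<inter> Gstar_orbit q"
    using C(1) by auto
  ultimately show ?thesis
    by (metis subset_empty)
qed

lemma Gstar_fixed_point_exists:
  assumes Y: "bclosed Y" "Y \<noteq> {}" and step: "\<And>q. q \<in> Y \<Longrightarrow> \<exists>r\<in>Gstar. umult r q \<in> Y"
  shows "\<exists>q\<in>Y. \<exists>r\<in>Gstar. umult r q = q"
proof -
  let ?P = "\<lambda>L. \<forall>q\<in>L. L \<inter> Gstar_orbit q \<noteq> {}"
  have chain: "?P (\<Inter>C)"
    if "C \<noteq> {}" "\<And>L. L \<in> C \<Longrightarrow> bclosed L \<and> L \<noteq> {} \<and> ?P L" "subset.chain UNIV C"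
    for C :: "'a set set set set"
    using Inter_chain_meets_Gstar_orbit[OF that] by blast
  have "?P Y"
    using step unfolding Gstar_orbit_def by blast
  then obtain M where M: "M \<subseteq> Y" "bclosed M" "M \<noteq> {}" "?P M"
    and minimal_all: "\<forall>L\<subseteq>M. bclosed L \<and> L \<noteq> {} \<and> ?P L \<longrightarrow> L = M"
    using minimal_bclosed_exists[where P = "?P", OF Y _ chain] by blast
  have minimal: "L = M" if "L \<subseteq> M" "bclosed L" "L \<noteq> {}" "?P L" for L
    using minimal_all that by blast
  obtain q where q: "q \<in> M"
    using M by blast
  have uf: "ultrafilter r" if "r \<in> M" for r
    using that M bclosed_subset betaG_iff by blast
  have "M \<inter> Gstar_orbit q = M"
  proof (rule minimal)
    show "M \<inter> Gstar_orbit q \<subseteq> M"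
      by blast
    show "bclosed (M \<inter> Gstar_orbit q)"
      using M q bclosed_Int_Gstar_orbit by blast
    show "M \<inter> Gstar_orbit q \<noteq> {}"
      using M q by blast
    show "?P (M \<inter> Gstar_orbit q)"
    proof
      fix s assume "s \<in> M \<inter> Gstar_orbit q"
      then obtain r where r: "r \<in> Gstar" "s = umult r q" "s \<in> M"
        unfolding Gstar_orbit_def by blast
      then obtain r' where r': "r' \<in> Gstar" "umult r' s \<in> M"
        using M(4) unfolding Gstar_orbit_def by blast
      then have "umult r' s = umult (umult r' r) q"
        using r uf q Gstar_uf umult_assoc by metis
      then show "(M \<inter> Gstar_orbit q) \<inter> Gstar_orbit s \<noteq> {}"
        unfolding Gstar_orbit_def using r r' umult_Gstar[OF Gstar_uf] by blast
    qed
  qed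
  then have "q \<in> Gstar_orbit q"
    using q by blast
  then obtain r where "r \<in> Gstar" "umult r q = q"
    unfolding Gstar_orbit_def by (metis imageE)
  then show ?thesis
    using q M(1) by blast
qed
lemma idempotent_fixing_exists:
  assumes q: "q \<in> betaG" and r: "r \<in> Gstar" "umult r q = q"
  shows "\<exists>e. idempotent_star e \<and> umult e q = q"
proof -
  let ?W = "Gstar \<inter> {r \<in> betaG. umult r q \<in> {q}}"
  have "bclosed ?W"
    using q by (intro bclosed_Int bclosed_Gstar bclosed_umult_preimage bclosed_singleton)
  moreover have "?W \<noteq> {}"
    using r Gstar_subset_betaG by blast
  moreover have "\<forall>a\<in>?W. \<forall>b\<in>?W. umult a b \<in> ?W"
    using q Gstar_subset_betaG by (auto simp: umult_assoc Gstar_uf betaG_iff umult_Gstar)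
  ultimately show ?thesis
    using bclosed_subsemigroup_idempotent[of ?W] by (auto simp: idempotent_star_def)
qed

section \<open>Non-scattered sets lie in idempotent products\<close>

lemma Delta_eq: "Delta p X = (\<lambda>g. lshift g p) ` {g. pre g X \<in> p}"
  unfolding Delta_def by (auto simp: lshift_iff)

lemma Xstar_umult_step:
  assumes q: "q \<in> Xstar X" and "infinite (Delta q X)"
  shows "\<exists>r\<in>Gstar. umult r q \<in> Xstar X"
proof -
  have "infinite {g. pre g X \<in> q}"
    using assms(2) by (auto simp: Delta_eq)
  then obtain r where r: "r \<in> Gstar" "{g. pre g X \<in> q} \<in> r"
    by (rule free_ultrafilter_exists)
  then have "X \<in> umult r q"
    using q by (simp add: umult_iff Gstar_uf Xstar_def)
  then show ?thesis
    using r q by (auto simp: Xstar_def umult_Gstar Gstar_uf)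
qed

lemma not_scattered_in_idempotent_product:
  assumes "\<not> scattered A"
  shows "\<exists>e q. idempotent_star e \<and> q \<in> betaG \<and> A \<in> umult e q"
proof -
  obtain X where X: "X \<subseteq> A" "infinite X" and Delta: "\<And>p. p \<in> Xstar X \<Longrightarrow> infinite (Delta p X)"
    using assms unfolding scattered_def by blast
  have "Xstar X \<noteq> {}"
    using free_ultrafilter_exists[OF X(2)] by (auto simp: Xstar_def)
  then obtain q r where q: "q \<in> Xstar X" and r: "r \<in> Gstar" "umult r q = q"
    using Gstar_fixed_point_exists[OF bclosed_Xstar] Xstar_umult_step Delta by metis
  then have "q \<in> betaG"
    using Gstar_subset_betaG by (auto simp: Xstar_def)
  then obtain e where "idempotent_star e" "umult e q = q"
    using idempotent_fixing_exists r by blast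
  moreover have "A \<in> q"
    using q X(1) uf_mono by (auto simp: Xstar_def Gstar_def)
  ultimately show ?thesis
    using \<open>q \<in> betaG\<close> by metis
qed

section \<open>Sets in \<open>e q\<close> contain piecewise shifted FP-sets\<close>

definition increasing_lists :: "nat \<Rightarrow> nat list set" where
  "increasing_lists n = {l. sorted_wrt (<) l \<and> set l \<subseteq> {..<n}}"

lemma finite_increasing_lists: "finite (increasing_lists n)"
proof (rule finite_subset)
  show "increasing_lists n \<subseteq> {l. set l \<subseteq> {..<n} \<and> distinct l}"
    by (auto simp: increasing_lists_def strict_sorted_iff)
qed (simp add: finite_subset_distinct)

lemma increasing_lists_snoc:
  "l @ [m] \<in> increasing_lists n \<longleftrightarrow> l \<in> increasing_lists m \<and> m < n"
  by (auto simp: increasing_lists_def sorted_wrt_append)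

lemma sorted_butlast_last:
  assumes "sorted_wrt (<) l" "l \<noteq> []"
  shows "l = butlast l @ [last l]" "butlast l \<in> increasing_lists (last l)"
proof -
  show *: "l = butlast l @ [last l]"
    using assms(2) by simp
  have "sorted_wrt (<) (butlast l @ [last l])"
    using assms(1) * by simp
  then show "butlast l \<in> increasing_lists (last l)"
    by (auto simp: increasing_lists_def sorted_wrt_append)
qed

lemma idempotent_star_set:
  assumes e: "idempotent_star e" and "B \<in> e"
  shows "{x \<in> B. pre x B \<in> e} \<in> e"
proof -
  have "{x. pre x B \<in> e} \<in> e"
    using assms umult_iff[of e e B] by (simp add: idempotent_star_def Gstar_def)
  then show ?thesis
    using uf_Int[OF idempotent_star_uf[OF e] \<open>B \<in> e\<close>] by (simp add: Collect_conj_eq)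
qed

text \<open>The starred set \<open>C\<close> of the Galvin-Glazer proof of Hindman's theorem.\<close>

lemma idempotent_star_subset:
  assumes e: "idempotent_star e" and "B \<in> e"
  shows "\<exists>C\<in>e. C \<subseteq> B \<and> (\<forall>x\<in>C. pre x C \<in> e)"
proof (intro bexI conjI ballI)
  let ?C = "{x \<in> B. pre x B \<in> e}"
  show "?C \<in> e" "?C \<subseteq> B"
    using idempotent_star_set[OF assms] by auto
  fix x assume "x \<in> ?C"
  then have "{y \<in> pre x B. pre y (pre x B) \<in> e} \<in> e"
    using idempotent_star_set[OF e] by blast
  moreover have "{y \<in> pre x B. pre y (pre x B) \<in> e} \<subseteq> pre x ?C"
    by (auto simp: pre_add)
  ultimately show "pre x ?C \<in> e"
    using uf_mono[OF idempotent_star_uf[OF e]] by blast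
qed

lemma sum_list_in_set:
  fixes h :: "nat \<Rightarrow> 'a::group_add"
  assumes "\<And>m. m < n \<Longrightarrow> h m \<in> C"
    and "\<And>m l. m < n \<Longrightarrow> l \<in> increasing_lists m \<Longrightarrow> l \<noteq> [] \<Longrightarrow> h m \<in> pre (sum_list (map h l)) C"
  shows "l \<in> increasing_lists n \<Longrightarrow> l \<noteq> [] \<Longrightarrow> sum_list (map h l) \<in> C"
proof (induction l rule: rev_induct)
  case (snoc m l)
  then have "l \<in> increasing_lists m" "m < n"
    using increasing_lists_snoc by auto
  moreover have "l \<in> increasing_lists n"
    using calculation by (auto simp: increasing_lists_def)
  ultimately show ?case
    using assms snoc.IH by (cases "l = []") auto
qed simp

text \<open>Hindman's theorem in the form of Galvin and Glazer, for arbitrary groups.\<close>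

lemma idempotent_star_FP_set:
  assumes e: "idempotent_star e" and "B \<in> e"
  obtains h :: "nat \<Rightarrow> 'a::group_add"
  where "inj h" "\<And>l. sorted_wrt (<) l \<Longrightarrow> l \<noteq> [] \<Longrightarrow> sum_list (map h l) \<in> B"
proof -
  have ue: "ultrafilter e"
    using e by (rule idempotent_star_uf)
  obtain C where C: "C \<in> e" "C \<subseteq> B" "\<And>x. x \<in> C \<Longrightarrow> pre x C \<in> e"
    using idempotent_star_subset[OF assms] by blast
  define good where "good f m x \<longleftrightarrow> x \<in> C \<and> x \<notin> f ` {..<m} \<and>
      (\<forall>l\<in>increasing_lists m. l \<noteq> [] \<longrightarrow> x \<in> pre (sum_list (map f l)) C)"
    for f :: "nat \<Rightarrow> 'a" and m x
  have "\<exists>h. \<forall>m. good h m (h m)"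
  proof (rule dependent_wellorder_choice)
    fix f g :: "nat \<Rightarrow> 'a" and m x
    assume "\<And>k. k < m \<Longrightarrow> f k = g k"
    then have "sum_list (map f l) = sum_list (map g l)" if "l \<in> increasing_lists m" for l
      using that by (auto simp: increasing_lists_def subset_iff intro!: arg_cong[where f = sum_list])
    moreover have "f ` {..<m} = g ` {..<m}"
      using \<open>\<And>k. k < m \<Longrightarrow> f k = g k\<close> by auto
    ultimately show "good f m x = good g m x"
      unfolding good_def by simp
  next
    fix m and f :: "nat \<Rightarrow> 'a"
    assume "\<And>k. k < m \<Longrightarrow> good f k (f k)"
    then have sums: "sum_list (map f l) \<in> C" if "l \<in> increasing_lists m" "l \<noteq> []" for l
      using sum_list_in_set[of m f C] that unfolding good_def by blast
    define Ls where "Ls = {l \<in> increasing_lists m. l \<noteq> []}"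
    have "finite Ls"
      using finite_increasing_lists by (simp add: Ls_def)
    then have "\<Inter>((\<lambda>l. pre (sum_list (map f l)) C) ` Ls) \<in> e"
      using C(3) sums by (intro uf_finite_Inter[OF ue]) (auto simp: Ls_def)
    then have "C \<inter> \<Inter>((\<lambda>l. pre (sum_list (map f l)) C) ` Ls) - f ` {..<m} \<in> e"
      using C(1) e by (intro Gstar_Diff_finite uf_Int[OF ue]) (auto simp: idempotent_star_def)
    then show "\<exists>x. good f m x"
      using uf_nonempty[OF ue] unfolding good_def Ls_def by blast
  qed
  then obtain h where good: "\<And>m. good h m (h m)"
    by blast
  have "inj h"
  proof (rule injI)
    fix i j assume "h i = h j"
    then show "i = j"
      using good[of i] good[of j] unfolding good_def by (metis lessThan_iff linorder_neqE imageI)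
  qed
  moreover have "sum_list (map h l) \<in> B" if "sorted_wrt (<) l" "l \<noteq> []" for l
  proof -
    have "l \<in> increasing_lists (Suc (Max (set l)))"
      using that by (auto simp: increasing_lists_def less_Suc_eq_le)
    then show ?thesis
      using sum_list_in_set[of "Suc (Max (set l))" h C] good that C(2) unfolding good_def by blast
  qed
  ultimately show ?thesis
    using that by blast
qed

lemma idempotent_product_contains_psFP:
  assumes e: "idempotent_star e" and q: "q \<in> betaG" and A: "A \<in> umult e q"
  shows "\<exists>S. is_psFP S \<and> S \<subseteq> A"
proof -
  have uq: "ultrafilter q"
    using q by (simp add: betaG_iff)
  have "{x. pre x A \<in> q} \<in> e"
    using A umult_iff idempotent_star_uf[OF e] uq by blast
  then obtain h :: "nat \<Rightarrow> 'a"
    where "inj h" and FP: "\<And>l. sorted_wrt (<) l \<Longrightarrow> l \<noteq> [] \<Longrightarrow> pre (sum_list (map h l)) A \<in> q"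
    using idempotent_star_FP_set[OF e] by (metis mem_Collect_eq)
  have "\<exists>y. \<forall>l\<in>increasing_lists n. y \<in> pre (sum_list (map h (l @ [n]))) A" for n
  proof -
    have "pre (sum_list (map h (l @ [n]))) A \<in> q" if "l \<in> increasing_lists n" for l
    proof (rule FP)
      have "l @ [n] \<in> increasing_lists (Suc n)"
        using that increasing_lists_snoc by blast
      then show "sorted_wrt (<) (l @ [n])"
        by (simp add: increasing_lists_def)
    qed simp
    then have "\<Inter>((\<lambda>l. pre (sum_list (map h (l @ [n]))) A) ` increasing_lists n) \<in> q"
      by (intro uf_finite_Inter[OF uq] finite_imageI finite_increasing_lists) blast
    then show ?thesis
      using uf_nonempty[OF uq] by blast
  qed
  then obtain b where b: "\<And>n l. l \<in> increasing_lists n \<Longrightarrow> b n \<in> pre (sum_list (map h (l @ [n]))) A"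
    by metis
  have "psFP h b \<subseteq> A"
  proof
    fix x assume "x \<in> psFP h b"
    then obtain l where l: "l \<noteq> []" "sorted_wrt (<) l" "x = sum_list (map h l) + b (last l)"
      unfolding psFP_def by blast
    then show "x \<in> A"
      using b[OF sorted_butlast_last(2)[OF l(2,1)]] sorted_butlast_last(1)[OF l(2,1)] by simp
  qed
  then show ?thesis
    using \<open>inj h\<close> unfolding is_psFP_def by blast
qed


section \<open>Piecewise shifted FP-sets are not scattered\<close>

lemma maximal_translation_free_set:
  fixes h :: "'a::group_add"
  shows "\<exists>M\<in>{C. \<forall>x\<in>C. h + x \<notin> C}. \<forall>X\<in>{C. \<forall>x\<in>C. h + x \<notin> C}. M \<subseteq> X \<longrightarrow> X = M"
proof (rule subset_Zorn)
  let ?A = "{C. \<forall>x\<in>C. h + x \<notin> C}"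
  fix C assume ch: "subset.chain ?A C"
  have "\<Union>C \<in> ?A"
  proof (intro CollectI ballI)
    fix x assume "x \<in> \<Union>C"
    then obtain C1 where C1: "C1 \<in> C" "x \<in> C1"
      by blast
    show "h + x \<notin> \<Union>C"
    proof
      assume "h + x \<in> \<Union>C"
      then obtain C2 where C2: "C2 \<in> C" "h + x \<in> C2"
        by blast
      have "C1 \<subseteq> C2 \<or> C2 \<subseteq> C1"
        using ch C1 C2 unfolding subset_chain_def by blast
      moreover have "C1 \<in> ?A" "C2 \<in> ?A"
        using ch C1 C2 unfolding subset_chain_def by blast+
      ultimately show False
        using C1 C2 by blast
    qed
  qed
  then show "\<exists>U\<in>?A. \<forall>X\<in>C. X \<subseteq> U"
    by blast
qed

lemma translation_free_cover:
  fixes h :: "'a::group_add"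
  assumes h: "h \<noteq> 0"
  shows "\<exists>M. (\<forall>x\<in>M. h + x \<notin> M) \<and> (\<forall>x. x \<in> M \<or> - h + x \<in> M \<or> h + x \<in> M)"
proof -
  let ?A = "{C. \<forall>x\<in>C. h + x \<notin> C}"
  obtain M where M: "M \<in> ?A" and maximal: "\<forall>X\<in>?A. M \<subseteq> X \<longrightarrow> X = M"
    using maximal_translation_free_set[of h] ..
  have "x \<in> M \<or> - h + x \<in> M \<or> h + x \<in> M" for x
  proof (rule ccontr)
    assume n: "\<not> (x \<in> M \<or> - h + x \<in> M \<or> h + x \<in> M)"
    have "h + y \<notin> insert x M" if "y \<in> insert x M" for y
    proof (cases "y = x")
      case True
      have "h + x \<noteq> x"
        using h add_right_cancel[of h x 0] by simp
      then show ?thesis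
        using True n by simp
    next
      case False
      then have "y \<in> M"
        using that by blast
      then have "h + y \<notin> M"
        using M by blast
      moreover have "h + y \<noteq> x"
      proof
        assume "h + y = x"
        then have "- h + x = y"
          by (metis minus_add_cancel)
        then show False
          using n \<open>y \<in> M\<close> by simp
      qed
      ultimately show ?thesis
        by blast
    qed
    then have "insert x M \<in> ?A"
      by blast
    then have "insert x M = M"
      using maximal by blast
    then show False
      using n by blast
  qed
  then show ?thesis
    using M by blast
qed

lemma lshift_fixpoint_free:
  assumes p: "ultrafilter p" and h: "h \<noteq> 0"
  shows "lshift h p \<noteq> p"
proof
  assume "lshift h p = p"
  then have invariant: "pre h A \<in> p \<longleftrightarrow> A \<in> p" for A
    using lshift_iff[of A h p] by simp
  obtain M where disjoint: "\<forall>x\<in>M. h + x \<notin> M"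
    and cover: "\<forall>x. x \<in> M \<or> - h + x \<in> M \<or> h + x \<in> M"
    using translation_free_cover[OF h] by blast
  have "M \<union> pre (- h) M \<union> pre h M = UNIV"
    using cover by auto
  then have "M \<union> pre (- h) M \<union> pre h M \<in> p"
    using uf_UNIV[OF p] by simp
  then have "M \<in> p \<or> pre (- h) M \<in> p \<or> pre h M \<in> p"
    by (simp add: uf_Un[OF p])
  moreover have "pre h (pre (- h) M) = M"
    by (simp add: pre_add)
  ultimately have "M \<in> p" "pre h M \<in> p"
    using invariant[of M] invariant[of "pre (- h) M"] by auto
  then have "M \<inter> pre h M \<in> p"
    by (rule uf_Int[OF p])
  moreover have "M \<inter> pre h M = {}"
    using disjoint by auto
  ultimately show False
    using uf_empty[OF p] by simp
qed

lemma inj_lshift: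
  assumes "ultrafilter p"
  shows "inj (\<lambda>g. lshift g p)"
proof (rule injI)
  fix g g' assume "lshift g p = lshift g' p"
  then have "lshift (- g') (lshift g p) = lshift (- g') (lshift g' p)"
    by simp
  then have "lshift (- g' + g) p = p"
    by (simp add: lshift_add lshift_zero)
  then have "- g' + g = 0"
    using lshift_fixpoint_free[OF assms] by blast
  then show "g = g'"
    by (metis add_minus_cancel add.right_neutral)
qed

definition psFP_prefix :: "(nat \<Rightarrow> 'a::group_add) \<Rightarrow> (nat \<Rightarrow> 'a) \<Rightarrow> nat list \<Rightarrow> 'a set" where
  "psFP_prefix g b ms =
     {sum_list (map g (ms @ d)) + b (last d) | d. d \<noteq> [] \<and> sorted_wrt (<) (ms @ d)}"

lemma psFP_prefix_Nil: "psFP_prefix g b [] = psFP g b"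
  by (simp add: psFP_prefix_def psFP_def)

lemma psFP_prefix_take: "psFP_prefix g b ms \<subseteq> psFP_prefix g b (take i ms)"
proof
  fix x assume "x \<in> psFP_prefix g b ms"
  then obtain d where d: "d \<noteq> []" "sorted_wrt (<) (ms @ d)" "x = sum_list (map g (ms @ d)) + b (last d)"
    unfolding psFP_prefix_def by blast
  let ?d = "drop i ms @ d"
  have split: "take i ms @ ?d = ms @ d"
    by simp
  moreover have "last ?d = last d"
    using d(1) by simp
  ultimately have "x = sum_list (map g (take i ms @ ?d)) + b (last ?d)"
    using d(3) by (simp only:)
  moreover have "?d \<noteq> []"
    using d(1) by simp
  moreover have "sorted_wrt (<) (take i ms @ ?d)"
    using d(2) by (simp only: split)
  ultimately show "x \<in> psFP_prefix g b (take i ms)"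
    unfolding psFP_prefix_def by blast
qed

lemma psFP_prefix_subset_pre:
  "psFP_prefix g b ms \<subseteq> pre (- sum_list (map g ms)) (psFP g b)"
proof
  fix x assume "x \<in> psFP_prefix g b ms"
  then obtain d where d: "d \<noteq> []" "sorted_wrt (<) (ms @ d)" "x = sum_list (map g (ms @ d)) + b (last d)"
    unfolding psFP_prefix_def by blast
  then have "- sum_list (map g ms) + x = sum_list (map g d) + b (last d)"
    by (simp add: add.assoc)
  moreover have "sorted_wrt (<) d"
    using d(2) by (simp add: sorted_wrt_append)
  ultimately show "x \<in> pre (- sum_list (map g ms)) (psFP g b)"
    using d(1) unfolding pre_iff psFP_def by blast
qed

text \<open>An element of \<open>psFP_prefix g b ms\<close> is either determined by its next index \<open>m \<le> n\<close>,
  or is a left translate by \<open>g n\<close> of another element of \<open>psFP g b\<close>.\<close>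

lemma psFP_prefix_cover:
  "psFP_prefix g b ms \<subseteq>
     (\<Union>m\<le>n. {sum_list (map g (ms @ [m])) + b m} \<union> psFP_prefix g b (ms @ [m]))
     \<union> pre (g n + - sum_list (map g ms)) (psFP g b)"
proof
  fix x assume "x \<in> psFP_prefix g b ms"
  then obtain d where d: "d \<noteq> []" "sorted_wrt (<) (ms @ d)" "x = sum_list (map g (ms @ d)) + b (last d)"
    unfolding psFP_prefix_def by blast
  then obtain m d' where d': "d = m # d'"
    by (cases d) auto
  show "x \<in> (\<Union>m\<le>n. {sum_list (map g (ms @ [m])) + b m} \<union> psFP_prefix g b (ms @ [m]))
     \<union> pre (g n + - sum_list (map g ms)) (psFP g b)"
  proof (cases "m \<le> n")
    case True
    show ?thesis
    proof (cases "d' = []")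
      case True
      then have "x = sum_list (map g (ms @ [m])) + b m"
        using d(3) d' by simp
      then show ?thesis
        using \<open>m \<le> n\<close> by blast
    next
      case False
      then have "x \<in> psFP_prefix g b (ms @ [m])"
        using d d' False unfolding psFP_prefix_def by (intro CollectI exI[of _ d']) simp
      then show ?thesis
        using \<open>m \<le> n\<close> by blast
    qed
  next
    case False
    have "g n + - sum_list (map g ms) + x = g n + (- sum_list (map g ms) + x)"
      by (simp only: add.assoc)
    also have "\<dots> = g n + (sum_list (map g d) + b (last d))"
      using d(3) by (simp add: add.assoc)
    also have "\<dots> = sum_list (map g (n # d)) + b (last (n # d))"
      using d(1) by (simp add: add.assoc)
    finally have eq: "g n + - sum_list (map g ms) + x = sum_list (map g (n # d)) + b (last (n # d))" .
    have "sorted_wrt (<) d"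
      using d(2) by (simp add: sorted_wrt_append)
    then have "sorted_wrt (<) (n # d)"
      using False d' by auto
    then have "x \<in> pre (g n + - sum_list (map g ms)) (psFP g b)"
      unfolding psFP_def pre_iff eq by blast
    then show ?thesis
      by blast
  qed
qed

lemma psFP_prefix_extend:
  assumes p: "p \<in> Gstar" and g: "inj g" and T: "finite {h. pre h (psFP g b) \<in> p}"
    and ms: "psFP_prefix g b ms \<in> p"
  shows "\<exists>m. psFP_prefix g b (ms @ [m]) \<in> p"
proof (rule ccontr)
  assume none: "\<nexists>m. psFP_prefix g b (ms @ [m]) \<in> p"
  have up: "ultrafilter p"
    using p by (rule Gstar_uf)
  let ?c = "\<lambda>m. sum_list (map g (ms @ [m])) + b m"
  have "pre (g n + - sum_list (map g ms)) (psFP g b) \<in> p" for n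
  proof -
    have "(\<Union>m\<le>n. {?c m} \<union> psFP_prefix g b (ms @ [m])) \<notin> p"
    proof
      assume "(\<Union>m\<le>n. {?c m} \<union> psFP_prefix g b (ms @ [m])) \<in> p"
      then obtain m where "{?c m} \<union> psFP_prefix g b (ms @ [m]) \<in> p"
        using uf_finite_Union[OF up, of "(\<lambda>m. {?c m} \<union> psFP_prefix g b (ms @ [m])) ` {..n}"]
        by auto
      then have "{?c m} \<in> p \<or> psFP_prefix g b (ms @ [m]) \<in> p"
        by (simp only: uf_Un[OF up])
      then show False
        using none p by (auto simp: Gstar_def)
    qed
    moreover have "(\<Union>m\<le>n. {?c m} \<union> psFP_prefix g b (ms @ [m]))
        \<union> pre (g n + - sum_list (map g ms)) (psFP g b) \<in> p"
      using uf_mono[OF up ms psFP_prefix_cover] .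
    ultimately show ?thesis
      using uf_Un[OF up] by blast
  qed
  then have "range (\<lambda>n. g n + - sum_list (map g ms)) \<subseteq> {h. pre h (psFP g b) \<in> p}"
    by blast
  moreover have "inj (\<lambda>n. g n + - sum_list (map g ms))"
  proof (rule injI)
    fix n n' assume "g n + - sum_list (map g ms) = g n' + - sum_list (map g ms)"
    then have "g n = g n'"
      by (simp only: add_right_cancel)
    then show "n = n'"
      by (rule injD[OF g])
  qed
  then have "infinite (range (\<lambda>n. g n + - sum_list (map g ms)))"
    by (simp add: finite_image_iff)
  ultimately show False
    using T finite_subset by blast
qed

lemma psFP_prefix_long:
  assumes p: "p \<in> Gstar" and g: "inj g" and T: "finite {h. pre h (psFP g b) \<in> p}"
    and X: "psFP g b \<in> p"
  shows "\<exists>ms. length ms = j \<and> psFP_prefix g b ms \<in> p"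
proof (induction j)
  case 0
  show ?case
    using X by (simp add: psFP_prefix_Nil)
next
  case (Suc j)
  then obtain ms where ms: "length ms = j" "psFP_prefix g b ms \<in> p"
    by blast
  then obtain m where "psFP_prefix g b (ms @ [m]) \<in> p"
    using psFP_prefix_extend[OF p g T] by blast
  moreover have "length (ms @ [m]) = Suc j"
    using ms(1) by simp
  ultimately show ?case
    by blast
qed

lemma psFP_prefix_sorted: "x \<in> psFP_prefix g b ms \<Longrightarrow> sorted_wrt (<) ms"
  unfolding psFP_prefix_def by (auto simp: sorted_wrt_append)

lemma sum_list_take_Suc_quotient:
  fixes g :: "nat \<Rightarrow> 'a::group_add"
  shows "i < length ms \<Longrightarrow> - sum_list (map g (take i ms)) + sum_list (map g (take (Suc i) ms)) = g (ms ! i)"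
  by (simp add: take_Suc_conv_app_nth)

lemma card_le_square_if_quotients:
  fixes D :: "nat \<Rightarrow> 'a::group_add"
  assumes T: "finite T" and inj: "inj_on D {..<j}"
    and D: "D ` {..<j} \<subseteq> (\<lambda>(a, c). a + - c) ` (T \<times> T)"
  shows "j \<le> card T * card T"
proof -
  have "j = card (D ` {..<j})"
    using inj by (simp add: card_image)
  also have "\<dots> \<le> card ((\<lambda>(a, c). a + - c) ` (T \<times> T))"
    using T D by (intro card_mono) simp_all
  also have "\<dots> \<le> card (T \<times> T)"
    using T by (intro card_image_le) simp
  finally show ?thesis
    by (simp add: card_cartesian_product)
qed

text \<open>If only finitely many translates \<open>h\<^sup>-\<^sup>1X\<close> belonged to \<open>p\<close>, the inverses of the partial
  products along a long prefix would all lie in that finite set, and so would their pairwise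
  quotients; but these quotients include the distinct generators \<open>g (ms ! i)\<close>.\<close>

lemma psFP_translates_infinite:
  assumes g: "inj g" and p: "p \<in> Gstar" and X: "psFP g b \<in> p"
  shows "infinite {h. pre h (psFP g b) \<in> p}"
proof
  let ?T = "{h. pre h (psFP g b) \<in> p}"
  let ?s = "\<lambda>l. sum_list (map g l)"
  assume T: "finite ?T"
  define j where "j = Suc (card ?T * card ?T)"
  obtain ms where ms: "length ms = j" "psFP_prefix g b ms \<in> p"
    using psFP_prefix_long[OF p g T X] by blast
  have up: "ultrafilter p"
    using p by (rule Gstar_uf)
  have prefix_T: "- ?s (take i ms) \<in> ?T" for i
    using uf_mono[OF up ms(2)] psFP_prefix_take[of g b ms i] psFP_prefix_subset_pre[of g b "take i ms"]
    by blast
  obtain x where "x \<in> psFP_prefix g b ms"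
    using uf_nonempty[OF up ms(2)] by blast
  then have "distinct ms"
    using psFP_prefix_sorted strict_sorted_iff by blast
  define D where "D i = - ?s (take i ms) + ?s (take (Suc i) ms)" for i
  have D: "D i = g (ms ! i)" if "i < j" for i
    unfolding D_def using that ms(1) by (simp add: sum_list_take_Suc_quotient)
  have "inj_on D {..<j}"
  proof (rule inj_onI)
    fix i i' assume i: "i \<in> {..<j}" "i' \<in> {..<j}" and "D i = D i'"
    then have "g (ms ! i) = g (ms ! i')"
      using D by simp
    then have "ms ! i = ms ! i'"
      by (rule injD[OF g])
    then show "i = i'"
      using i \<open>distinct ms\<close> ms(1) nth_eq_iff_index_eq by auto
  qed
  moreover have "D ` {..<j} \<subseteq> (\<lambda>(a, c). a + - c) ` (?T \<times> ?T)"
  proof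
    fix y assume "y \<in> D ` {..<j}"
    then obtain i where "y = D i"
      by blast
    then have y: "y = (\<lambda>(a, c). a + - c) (- ?s (take i ms), - ?s (take (Suc i) ms))"
      by (simp add: D_def)
    have "(- ?s (take i ms), - ?s (take (Suc i) ms)) \<in> ?T \<times> ?T"
      using prefix_T by blast
    then show "y \<in> (\<lambda>(a, c). a + - c) ` (?T \<times> ?T)"
      using y by (rule rev_image_eqI)
  qed
  ultimately have "j \<le> card ?T * card ?T"
    by (rule card_le_square_if_quotients[OF T])
  then show False
    by (simp add: j_def)
qed
lemma psFP_infinite:
  assumes g: "inj g"
  shows "infinite (psFP g b)"
proof
  assume fin: "finite (psFP g b)"
  let ?n = "Suc (card (psFP g b))"
  let ?f = "\<lambda>m. g m + (g ?n + b ?n)"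
  have "?f ` {..<?n} \<subseteq> psFP g b"
  proof
    fix x assume "x \<in> ?f ` {..<?n}"
    then obtain m where m: "m < ?n" "x = ?f m"
      by blast
    then have "x = sum_list (map g [m, ?n]) + b (last [m, ?n])"
      by (simp add: add.assoc)
    then show "x \<in> psFP g b"
      using m(1) unfolding psFP_def by fastforce
  qed
  moreover have "inj_on ?f {..<?n}"
  proof (rule inj_onI)
    fix m m' assume "?f m = ?f m'"
    then have "g m = g m'"
      by (simp only: add_right_cancel)
    then show "m = m'"
      by (rule injD[OF g])
  qed
  ultimately have "card {..<?n} \<le> card (psFP g b)"
    by (intro card_inj_on_le[OF _ _ fin])
  then show False
    by simp
qed

lemma psFP_not_scattered:
  assumes g: "inj g" and A: "psFP g b \<subseteq> A"
  shows "\<not> scattered A"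
proof
  assume "scattered A"
  then obtain p where p: "p \<in> Xstar (psFP g b)" "finite (Delta p (psFP g b))"
    using A psFP_infinite[OF g] unfolding scattered_def by blast
  then have "finite ((\<lambda>h. lshift h p) ` {h. pre h (psFP g b) \<in> p})"
    by (simp add: Delta_eq)
  moreover have "ultrafilter p"
    using p(1) by (simp add: Xstar_def Gstar_def)
  then have "inj_on (\<lambda>h. lshift h p) {h. pre h (psFP g b) \<in> p}"
    by (rule inj_on_subset[OF inj_lshift]) simp
  ultimately have "finite {h. pre h (psFP g b) \<in> p}"
    by (rule finite_imageD)
  then show False
    using psFP_translates_infinite[OF g] p(1) by (simp add: Xstar_def)
qed

lemma sum_list_conjugate:
  "sum_list (map (\<lambda>k. c + h k + - c) l) = c + sum_list (map h l) + - (c::'a::group_add)"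
proof (induction l)
  case (Cons a l)
  have "sum_list (map (\<lambda>k. c + h k + - c) (a # l)) = (c + h a + - c) + (c + sum_list (map h l) + - c)"
    using Cons by simp
  also have "\<dots> = c + (h a + sum_list (map h l)) + - c"
    by (simp only: add.assoc minus_add_cancel)
  finally show ?case
    by simp
qed simp

lemma psFP_conjugate:
  "psFP (\<lambda>n. x + g n + - x) (\<lambda>n. x + b n) = (\<lambda>y. x + y) ` psFP g b"
proof -
  have "sum_list (map (\<lambda>n. x + g n + - x) l) + (x + b (last l))
      = x + (sum_list (map g l) + b (last l))" for l
    unfolding sum_list_conjugate by (simp only: add.assoc minus_add_cancel)
  then show ?thesis
    unfolding psFP_def by auto
qed

lemma not_scattered_iff_psFP: "\<not> scattered A \<longleftrightarrow> (\<exists>S. is_psFP S \<and> S \<subseteq> A)"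
proof
  assume "\<not> scattered A"
  then obtain e q where "idempotent_star e" "q \<in> betaG" "A \<in> umult e q"
    using not_scattered_in_idempotent_product by blast
  then show "\<exists>S. is_psFP S \<and> S \<subseteq> A"
    by (rule idempotent_product_contains_psFP)
next
  assume "\<exists>S. is_psFP S \<and> S \<subseteq> A"
  then show "\<not> scattered A"
    unfolding is_psFP_def using psFP_not_scattered by blast
qed

lemma idempotent_product_not_scattered:
  "idempotent_star e \<Longrightarrow> q \<in> betaG \<Longrightarrow> A \<in> umult e q \<Longrightarrow> \<not> scattered A"
  using idempotent_product_contains_psFP not_scattered_iff_psFP by blast

lemma not_scattered_pre:
  assumes "\<not> scattered (pre x A)"
  shows "\<not> scattered A"
proof -
  obtain g b where g: "inj g" and "psFP g b \<subseteq> pre x A"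
    using assms unfolding not_scattered_iff_psFP is_psFP_def by blast
  then have "psFP (\<lambda>n. x + g n + - x) (\<lambda>n. x + b n) \<subseteq> A"
    unfolding psFP_conjugate using image_mono image_pre by metis
  moreover have "inj (\<lambda>n. x + g n + - x)"
  proof (rule injI)
    fix n n' assume "x + g n + - x = x + g n' + - x"
    then have "g n = g n'"
      by (simp only: add_right_cancel add_left_cancel)
    then show "n = n'"
      by (rule injD[OF g])
  qed
  ultimately show ?thesis
    using psFP_not_scattered by blast
qed

section \<open>The ideal \<open>Sc\<^sub>G\<^sup>\<and>\<close>\<close>

lemma ScHat_iff: "p \<in> ScHat \<longleftrightarrow> p \<in> betaG \<and> (\<forall>A\<in>p. \<not> scattered A)"
  unfolding ScHat_def betaG_iff using uf_Compl by blast

lemma bclosed_ScHat: "bclosed (ScHat :: 'a::group_add set set set)"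
proof (rule bclosedI)
  show "(ScHat :: 'a set set set) \<subseteq> betaG"
    by (auto simp: ScHat_def)
  show "bcl ScHat \<subseteq> (ScHat :: 'a set set set)"
  proof
    fix p :: "'a set set" assume "p \<in> bcl ScHat"
    then have "p \<in> betaG" "\<forall>A\<in>p. \<exists>s\<in>ScHat. A \<in> s"
      by (auto simp: bcl_def)
    then show "p \<in> ScHat"
      using ScHat_iff by blast
  qed
qed

lemma idempotent_products_subset_ScHat:
  "{umult e p | e p. idempotent_star e \<and> p \<in> betaG} \<subseteq> (ScHat :: 'a::group_add set set set)"
proof
  fix s :: "'a set set" assume "s \<in> {umult e p | e p. idempotent_star e \<and> p \<in> betaG}"
  then obtain e p where "idempotent_star e" "p \<in> betaG" "s = umult e p"
    by blast
  moreover have "s \<in> betaG"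
    using calculation idempotent_star_uf umult_betaG betaG_iff by blast
  ultimately show "s \<in> ScHat"
    using idempotent_product_not_scattered ScHat_iff by blast
qed

lemma idempotents_subset_ScHat: "{e. idempotent_star e} \<subseteq> (ScHat :: 'a::group_add set set set)"
proof
  fix e :: "'a set set" assume "e \<in> {e. idempotent_star e}"
  then have "idempotent_star e" "e \<in> betaG"
    using idempotent_star_uf betaG_iff by blast+
  then have "umult e e \<in> ScHat"
    using idempotent_products_subset_ScHat by blast
  then show "e \<in> ScHat"
    using \<open>idempotent_star e\<close> by (simp add: idempotent_star_def)
qed

lemma ScHat_eq_bcl_idempotent_products:
  "(ScHat :: 'a::group_add set set set) = bcl {umult e p | e p. idempotent_star e \<and> p \<in> betaG}"
proof
  show "(ScHat :: 'a set set set) \<subseteq> bcl {umult e p | e p. idempotent_star e \<and> p \<in> betaG}"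
  proof
    fix p :: "'a set set" assume "p \<in> ScHat"
    then have "p \<in> betaG" "\<forall>A\<in>p. \<not> scattered A"
      by (simp_all add: ScHat_iff)
    have "\<exists>s\<in>{umult e p | e p. idempotent_star e \<and> p \<in> betaG}. A \<in> s" if "A \<in> p" for A
    proof -
      have "\<not> scattered A"
        using \<open>\<forall>A\<in>p. \<not> scattered A\<close> that by blast
      then obtain e q where "idempotent_star e" "q \<in> betaG" "A \<in> umult e q"
        using not_scattered_in_idempotent_product by blast
      moreover from calculation have "umult e q \<in> {umult e p | e p. idempotent_star e \<and> p \<in> betaG}"
        by auto
      ultimately show ?thesis
        by blast
    qed
    then show "p \<in> bcl {umult e p | e p. idempotent_star e \<and> p \<in> betaG}"
      using \<open>p \<in> betaG\<close> unfolding bcl_def by blast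
  qed
  show "bcl {umult e p | e p. idempotent_star e \<and> p \<in> betaG} \<subseteq> (ScHat :: 'a set set set)"
    using bcl_mono[OF idempotent_products_subset_ScHat] by (simp only: bclosed_bcl[OF bclosed_ScHat])
qed

lemma idempotent_star_exists:
  assumes "infinite (UNIV :: 'a::group_add set)"
  shows "\<exists>e :: 'a set set. idempotent_star e"
proof -
  obtain p :: "'a set set" where "p \<in> Gstar"
    using free_ultrafilter_exists[OF assms] by blast
  moreover have "\<forall>a\<in>Gstar. \<forall>b\<in>(Gstar :: 'a set set set). umult a b \<in> Gstar"
    using umult_Gstar Gstar_uf by blast
  ultimately obtain e :: "'a set set" where "e \<in> Gstar" "umult e e = e"
    using bclosed_subsemigroup_idempotent[OF bclosed_Gstar] by blast
  then show ?thesis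
    unfolding idempotent_star_def by blast
qed

lemma bideal_ScHat:
  assumes "infinite (UNIV :: 'a::group_add set)"
  shows "bideal (ScHat :: 'a set set set)"
  unfolding bideal_def
proof (intro conjI ballI)
  obtain e :: "'a set set" where e: "idempotent_star e"
    using idempotent_star_exists[OF assms] by blast
  then have "umult e e \<in> ScHat"
    using idempotent_products_subset_ScHat idempotent_star_uf betaG_iff by blast
  then show "(ScHat :: 'a set set set) \<noteq> {}"
    by blast
  show "(ScHat :: 'a set set set) \<subseteq> betaG"
    by (auto simp: ScHat_def)
next
  fix p q :: "'a set set" assume p: "p \<in> ScHat" and q: "q \<in> betaG"
  then have up: "ultrafilter p" and uq: "ultrafilter q" and p_large: "\<forall>A\<in>p. \<not> scattered A"
    by (auto simp: ScHat_iff betaG_iff)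
  have "\<not> scattered A" if "A \<in> umult p q" for A
  proof -
    have "{x. pre x A \<in> q} \<in> p"
      using that umult_iff[OF up uq] by simp
    then obtain e r where er: "idempotent_star e" "r \<in> betaG" "{x. pre x A \<in> q} \<in> umult e r"
      using p_large not_scattered_in_idempotent_product by blast
    have ue: "ultrafilter e" and ur: "ultrafilter r"
      using er idempotent_star_uf by (auto simp: betaG_iff)
    have "A \<in> umult (umult e r) q"
      using umult_iff[OF umult_uf[OF ue ur] uq] er(3) by simp
    then have "A \<in> umult e (umult r q)"
      by (simp add: umult_assoc[OF ue ur uq])
    then show ?thesis
      using idempotent_product_not_scattered er(1) umult_betaG[OF er(2) q] by blast
  qed
  then show "umult p q \<in> ScHat"
    using umult_betaG[OF _ q] p by (simp add: ScHat_iff)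
  have "\<not> scattered A" if "A \<in> umult q p" for A
  proof -
    have "{x. pre x A \<in> p} \<in> q"
      using that umult_iff[OF uq up] by simp
    then obtain x where "pre x A \<in> p"
      using uf_nonempty[OF uq] by blast
    then show ?thesis
      using p_large not_scattered_pre by blast
  qed
  then show "umult q p \<in> ScHat"
    using umult_betaG[OF q] p by (simp add: ScHat_iff)
qed

lemma ScHat_subset_bclosed_bideal:
  fixes I :: "'a::group_add set set set"
  assumes "bclosed I" "bideal I" "{e. idempotent_star e} \<subseteq> I"
  shows "ScHat \<subseteq> I"
proof -
  have "{umult e p | e p. idempotent_star e \<and> p \<in> betaG} \<subseteq> I"
    using assms(2,3) unfolding bideal_def by blast
  then show ?thesis
    unfolding ScHat_eq_bcl_idempotent_products
    using bcl_mono bclosed_bcl[OF assms(1)] by blast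
qed

theorem theorem6p8:
  assumes "infinite (UNIV :: 'a::group_add set)"
  shows "(ScHat :: 'a set set set) =
           bcl {umult e p | e p. idempotent_star e \<and> p \<in> betaG}
       \<and> (bideal (ScHat :: 'a set set set)
          \<and> (\<forall>p :: 'a set set. p \<in> betaG \<longrightarrow>
               (p \<in> ScHat \<longleftrightarrow> (\<forall>P\<in>p. \<exists>S. is_psFP S \<and> S \<subseteq> P))))
       \<and> (bclosed (ScHat :: 'a set set set) \<and> bideal (ScHat :: 'a set set set)
           \<and> {e. idempotent_star e} \<subseteq> (ScHat :: 'a set set set)
           \<and> (\<forall>I :: 'a set set set. bclosed I \<and> bideal I \<and> {e. idempotent_star e} \<subseteq> I
                \<longrightarrow> ScHat \<subseteq> I))"
proof (intro conjI allI impI)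
  fix p :: "'a set set" assume "p \<in> betaG"
  then show "p \<in> ScHat \<longleftrightarrow> (\<forall>P\<in>p. \<exists>S. is_psFP S \<and> S \<subseteq> P)"
    by (simp add: ScHat_iff not_scattered_iff_psFP)
next
  fix I :: "'a set set set"
  assume "bclosed I \<and> bideal I \<and> {e. idempotent_star e} \<subseteq> I"
  then show "ScHat \<subseteq> I"
    using ScHat_subset_bclosed_bideal by blast
qed (simp_all add: ScHat_eq_bcl_idempotent_products[symmetric] bideal_ScHat[OF assms]
       bclosed_ScHat idempotents_subset_ScHat)

end
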